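(* The constancy atoms $=\!(\vec v)$ and the inconstancy atoms $\neq\!(\vec v)$ are not definable in $\mathbf{FO}(\mathrm{NE},\sqcup)$.
   Context: Team semantics (lax version). For a structure $\mathfrak M$ with domain $M$, a team $X$ is a (possibly empty) set of assignments $s:V\to M$, $V$ a finite set of variables. Satisfaction for formulas in negation normal form: first-order literal $\alpha$: every $s\in X$ satisfies $\alpha$ (Tarski); $\psi\vee\theta$: $X=Y\cup Z$ with $\mathfrak M\models_Y\psi$, $\mathfrak M\models_Z\theta$; $\psi\wedge\theta$: both; $\exists v\psi$: some $F:X\to\mathcal P(M)\setminus\{\emptyset\}$ with $\mathfrak M\models_{X[F/v]}\psi$, $X[F/v]=\{s[m/v]:s\in X,m\in F(s)\}$; $\forall v\psi$: $\mathfrak M\models_{X[M/v]}\psi$, $X[M/v]=\{s[m/v]:s\in X,m\in M\}$. $\mathfrak M\models_X\mathrm{NE}$ iff $X\ne\emptyset$; $\mathfrak M\models_X\phi\sqcup\psi$ iff $\mathfrak M\models_X\phi$ or $\mathfrak M\models_X\psi$. Constancy: $\mathfrak M\models_X=\!(\vec v)$ iff $s(\vec v)=s'(\vec v)$ for all $s,s'\in X$; inconstancy: $\mathfrak M\models_X\neq\!(\vec v)$ iff there are $s,s'\in X$ with $s(\vec v)\ne s'(\vec v)$. An atom $A\vec v$ is definable in a logic $L$ if there is a formula $\theta(\vec v)\in L$ over the empty vocabulary ($\vec v$ distinct variables) with $\mathfrak M\models_XA\vec v\iff\mathfrak M\models_X\theta(\vec v)$ for all structures $\mathfrak M$ and teams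 $X$ whose domain contains $\vec v$. *)

theory Defs
  imports Main
begin

text \<open>Variables are natural numbers. Formulas are in negation normal form; over the
empty vocabulary the first-order literals are equalities and negated equalities of
variables.\<close>

datatype fml =
    Eq nat nat
  | Neq nat nat
  | And fml fml
  | Or fml fml
  | Ex nat fml
  | All nat fml
  | NE
  | Sqcup fml fml

primrec fv :: "fml \<Rightarrow> nat set" where
  "fv (Eq v w) = {v, w}"
| "fv (Neq v w) = {v, w}"
| "fv (And p q) = fv p \<union> fv q"
| "fv (Or p q) = fv p \<union> fv q"
| "fv (Ex v p) = fv p - {v}"
| "fv (All v p) = fv p - {v}"
| "fv NE = {}"
| "fv (Sqcup p q) = fv p \<union> fv q"

text \<open>Assignments are partial maps from variables to the domain (with finite domain of
definition); a team is a set of assignments. A structure over the empty vocabulary is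
just its (nonempty) domain M.\<close>

type_synonym 'a assign = "nat \<rightharpoonup> 'a"
type_synonym 'a team = "'a assign set"

definition team_on :: "'a set \<Rightarrow> nat set \<Rightarrow> 'a team \<Rightarrow> bool" where
  "team_on M V X \<longleftrightarrow> (\<forall>s\<in>X. dom s = V \<and> ran s \<subseteq> M)"

primrec sat :: "'a set \<Rightarrow> 'a team \<Rightarrow> fml \<Rightarrow> bool" where
  "sat M X (Eq v w) \<longleftrightarrow> (\<forall>s\<in>X. s v = s w)"
| "sat M X (Neq v w) \<longleftrightarrow> (\<forall>s\<in>X. s v \<noteq> s w)"
| "sat M X (And p q) \<longleftrightarrow> sat M X p \<and> sat M X q"
| "sat M X (Or p q) \<longleftrightarrow> (\<exists>Y Z. X = Y \<union> Z \<and> sat M Y p \<and> sat M Z q)"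
| "sat M X (Ex v p) \<longleftrightarrow> (\<exists>F. (\<forall>s\<in>X. F s \<noteq> {} \<and> F s \<subseteq> M) \<and>
        sat M {s(v \<mapsto> m) | s m. s \<in> X \<and> m \<in> F s} p)"
| "sat M X (All v p) \<longleftrightarrow> sat M {s(v \<mapsto> m) | s m. s \<in> X \<and> m \<in> M} p"
| "sat M X NE \<longleftrightarrow> X \<noteq> {}"
| "sat M X (Sqcup p q) \<longleftrightarrow> sat M X p \<or> sat M X q"

definition constancy :: "'a team \<Rightarrow> nat list \<Rightarrow> bool" where
  "constancy X vs \<longleftrightarrow> (\<forall>s\<in>X. \<forall>s'\<in>X. map s vs = map s' vs)"

definition inconstancy :: "'a team \<Rightarrow> nat list \<Rightarrow> bool" where
  "inconstancy X vs \<longleftrightarrow> (\<exists>s\<in>X. \<exists>s'\<in>X. map s vs \<noteq> map s' vs)"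

definition definable :: "('a team \<Rightarrow> nat list \<Rightarrow> bool) \<Rightarrow> nat list \<Rightarrow> bool" where
  "definable A vs \<longleftrightarrow> (\<exists>\<theta>. fv \<theta> \<subseteq> set vs \<and>
      (\<forall>(M::'a set) V X. M \<noteq> {} \<longrightarrow> finite V \<longrightarrow> set vs \<subseteq> V \<longrightarrow> team_on M V X \<longrightarrow>
          (A X vs \<longleftrightarrow> sat M X \<theta>)))"

end

theory Submission
  imports Defs
begin

text \<open>Over the empty vocabulary and an infinite domain, a formula of FO(NE, \<open>\<sqcup>\<close>)
cannot tell apart two teams that realise the same set of equality types, where the
equality type of an assignment records its domain and which of its variables carry equal
values. Quantifiers preserve this invariant because a fresh value is always available for
the quantified variable. The teams \<open>{s\<^sub>a}\<close> and \<open>{s\<^sub>a, s\<^sub>b}\<close>, with \<open>s\<^sub>a\<close>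
and \<open>s\<^sub>b\<close> constant with distinct values on \<open>vs\<close>, have the same equality types,
yet the first is constant on \<open>vs\<close> and the second is not.\<close>

definition eq_type :: "'a assign \<Rightarrow> (nat \<Rightarrow> nat \<Rightarrow> bool) \<times> nat set" where
  "eq_type s = ((\<lambda>u w. s u = s w), dom s)"

lemma eq_type_eq_iff:
  "eq_type s = eq_type t \<longleftrightarrow> (\<forall>u w. s u = s w \<longleftrightarrow> t u = t w) \<and> dom s = dom t"
  unfolding eq_type_def by (auto simp: fun_eq_iff)

lemma eq_type_eqD: "eq_type s = eq_type t \<Longrightarrow> s u = s w \<longleftrightarrow> t u = t w"
  unfolding eq_type_eq_iff by blast

lemma eq_type_fun_upd:
  assumes "eq_type s = eq_type t"
    and "\<And>u. u \<noteq> v \<Longrightarrow> s u = Some m \<longleftrightarrow> t u = Some m'"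
  shows "eq_type (s(v \<mapsto> m)) = eq_type (t(v \<mapsto> m'))"
  unfolding eq_type_eq_iff
proof (intro conjI allI)
  fix x y
  show "(s(v \<mapsto> m)) x = (s(v \<mapsto> m)) y \<longleftrightarrow> (t(v \<mapsto> m')) x = (t(v \<mapsto> m')) y"
    using assms unfolding eq_type_eq_iff by (cases "x = v"; cases "y = v") (auto simp: eq_commute)
  show "dom (s(v \<mapsto> m)) = dom (t(v \<mapsto> m'))"
    using assms(1) unfolding eq_type_eq_iff by simp
qed

lemma ex_eq_type_fun_upd:
  assumes "infinite (UNIV :: 'a set)"
    and "finite (dom (t :: 'a assign))"
    and "eq_type s = eq_type t"
  obtains m' where "eq_type (s(v \<mapsto> m)) = eq_type (t(v \<mapsto> m'))"
proof (cases "\<exists>u. u \<noteq> v \<and> s u = Some m")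
  case True
  then obtain u where u: "u \<noteq> v" "s u = Some m" by blast
  then obtain m' where m': "t u = Some m'"
    using assms(3) unfolding eq_type_eq_iff by blast
  have "s x = Some m \<longleftrightarrow> t x = Some m'" for x
    using eq_type_eqD[OF assms(3), of x u] u(2) m' by simp
  with assms(3) show ?thesis by (blast intro: that eq_type_fun_upd)
next
  case False
  \<comment> \<open>\<open>m\<close> is a new value for \<open>s\<close>, so it is matched by a value new for \<open>t\<close>.\<close>
  obtain m' where "m' \<notin> ran t"
    using ex_new_if_finite[OF assms(1) finite_ran[OF assms(2)]] by blast
  then have "t x \<noteq> Some m'" for x by (auto simp: ran_def)
  with False assms(3) show ?thesis by (blast intro: that eq_type_fun_upd)
qed

definition team_upd :: "'a team \<Rightarrow> nat \<Rightarrow> ('a assign \<Rightarrow> 'a set) \<Rightarrow> 'a team" where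
  "team_upd X v F = {s(v \<mapsto> m) | s m. s \<in> X \<and> m \<in> F s}"

lemma sat_Ex_team_upd:
  "sat M X (Ex v p) \<longleftrightarrow> (\<exists>F. (\<forall>s\<in>X. F s \<noteq> {} \<and> F s \<subseteq> M) \<and> sat M (team_upd X v F) p)"
  by (simp add: team_upd_def)

lemma sat_All_team_upd: "sat M X (All v p) \<longleftrightarrow> sat M (team_upd X v (\<lambda>_. M)) p"
  by (simp add: team_upd_def)

lemma finite_dom_team_upd_Un:
  "\<forall>s\<in>X \<union> Y. finite (dom s) \<Longrightarrow> \<forall>s\<in>team_upd X v F \<union> team_upd Y v G. finite (dom s)"
  unfolding team_upd_def by auto

lemma eq_type_image_team_upd_UNIV_subset:
  fixes X Y :: "'a team"
  assumes "infinite (UNIV :: 'a set)"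
    and "\<forall>t\<in>Y. finite (dom t)"
    and "eq_type ` X \<subseteq> eq_type ` Y"
  shows "eq_type ` team_upd X v (\<lambda>_. UNIV) \<subseteq> eq_type ` team_upd Y v (\<lambda>_. UNIV)"
proof
  fix x assume "x \<in> eq_type ` team_upd X v (\<lambda>_. UNIV)"
  then obtain s m where s: "s \<in> X" and x: "x = eq_type (s(v \<mapsto> m))"
    unfolding team_upd_def by auto
  obtain t where t: "t \<in> Y" "eq_type s = eq_type t" using s assms(3) by blast
  obtain m' where "eq_type (s(v \<mapsto> m)) = eq_type (t(v \<mapsto> m'))"
    using ex_eq_type_fun_upd[OF assms(1) _ t(2)] t(1) assms(2) by blast
  with t(1) show "x \<in> eq_type ` team_upd Y v (\<lambda>_. UNIV)"
    unfolding x team_upd_def by blast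
qed

text \<open>The witness for the existential on \<open>Y\<close> offers each \<open>t\<close> every value whose
update realises an equality type already realised on \<open>X\<close>.\<close>

lemma eq_type_image_team_upd_Ex:
  fixes X Y :: "'a team"
  assumes "infinite (UNIV :: 'a set)"
    and "\<forall>t\<in>Y. finite (dom t)"
    and "eq_type ` X = eq_type ` Y"
    and "\<forall>s\<in>X. F s \<noteq> {}"
  obtains G :: "'a assign \<Rightarrow> 'a set" where "\<forall>t\<in>Y. G t \<noteq> {}"
    and "eq_type ` team_upd X v F = eq_type ` team_upd Y v G"
proof -
  define G where "G t = {m'. eq_type (t(v \<mapsto> m')) \<in> eq_type ` team_upd X v F}" for t :: "'a assign"
  have lift: "m' \<in> G t"
    if "s \<in> X" "m \<in> F s" "eq_type (s(v \<mapsto> m)) = eq_type (t(v \<mapsto> m'))" for s m t m'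
  proof -
    have "s(v \<mapsto> m) \<in> team_upd X v F" using that(1,2) unfolding team_upd_def by blast
    then show ?thesis unfolding G_def using that(3) by (metis image_eqI mem_Collect_eq)
  qed
  have ext: "\<exists>m'. eq_type (s(v \<mapsto> m)) = eq_type (t(v \<mapsto> m'))"
    if "t \<in> Y" "eq_type s = eq_type t" for s t m
    using ex_eq_type_fun_upd[OF assms(1) _ that(2)] that(1) assms(2) by blast
  have "\<forall>t\<in>Y. G t \<noteq> {}"
  proof
    fix t assume t: "t \<in> Y"
    then obtain s where s: "s \<in> X" "eq_type s = eq_type t" using assms(3) by (metis imageE imageI)
    then obtain m where m: "m \<in> F s" using assms(4) by blast
    from ext[OF t s(2)] lift[OF s(1) m] show "G t \<noteq> {}" by blast
  qed
  moreover have "eq_type ` team_upd X v F = eq_type ` team_upd Y v G"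
  proof
    show "eq_type ` team_upd Y v G \<subseteq> eq_type ` team_upd X v F"
    proof
      fix x assume "x \<in> eq_type ` team_upd Y v G"
      then obtain t m' where "m' \<in> G t" "x = eq_type (t(v \<mapsto> m'))"
        unfolding team_upd_def by auto
      then show "x \<in> eq_type ` team_upd X v F" unfolding G_def by simp
    qed
    show "eq_type ` team_upd X v F \<subseteq> eq_type ` team_upd Y v G"
    proof
      fix x assume "x \<in> eq_type ` team_upd X v F"
      then obtain s m where s: "s \<in> X" "m \<in> F s" and x: "x = eq_type (s(v \<mapsto> m))"
        unfolding team_upd_def by auto
      obtain t where t: "t \<in> Y" "eq_type s = eq_type t" using s(1) assms(3) by (metis imageE imageI)
      obtain m' where m': "eq_type (s(v \<mapsto> m)) = eq_type (t(v \<mapsto> m'))"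
        using ext[OF t] by blast
      have "t(v \<mapsto> m') \<in> team_upd Y v G"
        using t(1) lift[OF s m'] unfolding team_upd_def by blast
      then show "x \<in> eq_type ` team_upd Y v G" unfolding x m' by (rule imageI)
    qed
  qed
  ultimately show ?thesis by (rule that)
qed

lemma image_Int_vimage: "f ` (A \<inter> f -` B) = f ` A \<inter> B"
  by auto

lemma sat_eq_type_invariant:
  assumes "infinite (UNIV :: 'a set)"
  shows "\<lbrakk>\<forall>s\<in>X \<union> Y. finite (dom s); eq_type ` X = eq_type ` (Y :: 'a team);
          sat UNIV X \<phi>\<rbrakk> \<Longrightarrow> sat UNIV Y \<phi>"
proof (induction \<phi> arbitrary: X Y)
  case (Eq v w)
  have "t v = t w" if "t \<in> Y" for t
  proof -
    have "eq_type t \<in> eq_type ` X" using that unfolding Eq.prems(2) by (rule imageI)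
    then obtain s where s: "s \<in> X" "eq_type s = eq_type t" by (metis imageE)
    with Eq.prems(3) have "s v = s w" by simp
    with eq_type_eqD[OF s(2), of v w] show ?thesis by simp
  qed
  then show ?case by simp
next
  case (Neq v w)
  have "t v \<noteq> t w" if "t \<in> Y" for t
  proof -
    have "eq_type t \<in> eq_type ` X" using that unfolding Neq.prems(2) by (rule imageI)
    then obtain s where s: "s \<in> X" "eq_type s = eq_type t" by (metis imageE)
    with Neq.prems(3) have "s v \<noteq> s w" by simp
    with eq_type_eqD[OF s(2), of v w] show ?thesis by simp
  qed
  then show ?case by simp
next
  case (Or p q)
  from Or.prems(3) obtain X1 X2 where X: "X = X1 \<union> X2" "sat UNIV X1 p" "sat UNIV X2 q"
    by auto
  \<comment> \<open>Split \<open>Y\<close> according to the equality types realised in each half of \<open>X\<close>.\<close>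
  let ?Y1 = "Y \<inter> eq_type -` eq_type ` X1" and ?Y2 = "Y \<inter> eq_type -` eq_type ` X2"
  have types: "eq_type ` X1 = eq_type ` ?Y1" "eq_type ` X2 = eq_type ` ?Y2"
    unfolding image_Int_vimage Or.prems(2)[symmetric] X(1) by auto
  have fin: "\<forall>s\<in>X1 \<union> ?Y1. finite (dom s)" "\<forall>s\<in>X2 \<union> ?Y2. finite (dom s)"
    using Or.prems(1) X(1) by auto
  have "sat UNIV ?Y1 p" by (rule Or.IH(1)[OF fin(1) types(1) X(2)])
  moreover have "sat UNIV ?Y2 q" by (rule Or.IH(2)[OF fin(2) types(2) X(3)])
  moreover have "Y = ?Y1 \<union> ?Y2"
    unfolding Int_Un_distrib[symmetric] vimage_Un[symmetric] image_Un[symmetric]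
      X(1)[symmetric] Or.prems(2) by blast
  ultimately show ?case by auto
next
  case (Ex v p)
  have finY: "\<forall>t\<in>Y. finite (dom t)" using Ex.prems(1) by simp
  obtain F where F: "\<forall>s\<in>X. F s \<noteq> {}" "sat UNIV (team_upd X v F) p"
    using Ex.prems(3) unfolding sat_Ex_team_upd by blast
  obtain G where G: "\<forall>t\<in>Y. G t \<noteq> {}" "eq_type ` team_upd X v F = eq_type ` team_upd Y v G"
    by (rule eq_type_image_team_upd_Ex[OF assms finY Ex.prems(2) F(1)])
  have "sat UNIV (team_upd Y v G) p"
    by (rule Ex.IH[OF finite_dom_team_upd_Un[OF Ex.prems(1)] G(2) F(2)])
  with G(1) show ?case unfolding sat_Ex_team_upd by blast
next
  case (All v p)
  have fin: "\<forall>s\<in>X. finite (dom s)" "\<forall>t\<in>Y. finite (dom t)" using All.prems(1) by simp_all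
  have "eq_type ` team_upd X v (\<lambda>_. UNIV) = eq_type ` team_upd Y v (\<lambda>_. UNIV)"
    by (intro equalityI eq_type_image_team_upd_UNIV_subset[OF assms] fin)
      (simp_all add: All.prems(2))
  from All.IH[OF finite_dom_team_upd_Un[OF All.prems(1)] this] All.prems(3)
  show ?case unfolding sat_All_team_upd .
qed auto

lemma definable_eq_type_invariant:
  assumes "infinite (UNIV :: 'a set)"
    and "definable A vs"
    and "finite V" "set vs \<subseteq> V"
    and "team_on (UNIV :: 'a set) V X" "team_on UNIV V Y"
    and "eq_type ` X = eq_type ` Y"
  shows "A X vs \<longleftrightarrow> A Y vs"
proof -
  obtain \<theta> where \<theta>: "\<forall>(M :: 'a set) V X. M \<noteq> {} \<longrightarrow> finite V \<longrightarrow> set vs \<subseteq> V \<longrightarrow>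
      team_on M V X \<longrightarrow> (A X vs \<longleftrightarrow> sat M X \<theta>)"
    using assms(2) unfolding definable_def by blast
  have fin: "\<forall>s\<in>X \<union> Y. finite (dom s)" "\<forall>s\<in>Y \<union> X. finite (dom s)"
    using assms(3,5,6) unfolding team_on_def by auto
  have "sat UNIV X \<theta> \<longleftrightarrow> sat UNIV Y \<theta>"
    using sat_eq_type_invariant[OF assms(1) fin(1) assms(7)]
      sat_eq_type_invariant[OF assms(1) fin(2) assms(7)[symmetric]] by blast
  then show ?thesis
    using \<theta>[rule_format, OF UNIV_not_empty assms(3,4)] assms(5,6) by simp
qed

lemma eq_type_restrict_const: "eq_type ((\<lambda>_. Some a) |` V) = eq_type ((\<lambda>_. Some b) |` V)"
  unfolding eq_type_eq_iff dom_restrict by (simp add: restrict_map_def)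

theorem mainTheorem17:
  fixes vs :: "nat list"
  assumes "infinite (UNIV :: 'a set)"
    and "vs \<noteq> []"
    and "distinct vs"
  shows "\<not> definable (constancy :: 'a team \<Rightarrow> nat list \<Rightarrow> bool) vs
       \<and> \<not> definable (inconstancy :: 'a team \<Rightarrow> nat list \<Rightarrow> bool) vs"
proof -
  obtain a b :: 'a where "a \<noteq> b"
    using ex_new_if_finite[OF assms(1), of "{undefined}"] by blast
  define sa where "sa = (\<lambda>_. Some a) |` set vs"
  define sb where "sb = (\<lambda>_. Some b) |` set vs"
  have teams: "team_on UNIV (set vs) {sa}" "team_on UNIV (set vs) {sa, sb}"
    unfolding team_on_def sa_def sb_def by auto
  have types: "eq_type ` {sa} = eq_type ` {sa, sb}"
    using eq_type_restrict_const unfolding sa_def sb_def by auto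
  have "map sa vs \<noteq> map sb vs"
    using \<open>a \<noteq> b\<close> assms(2) unfolding sa_def sb_def by (cases vs) auto
  then have "constancy {sa} vs \<noteq> constancy {sa, sb} vs"
    and "inconstancy {sa} vs \<noteq> inconstancy {sa, sb} vs"
    unfolding constancy_def inconstancy_def by auto
  with definable_eq_type_invariant[OF assms(1) _ _ _ teams types] show ?thesis
    by blast
qed

end
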